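(* For every positive integer $m$, the line graph $L(K_{2m+1})$ of the complete graph on $2m+1$ vertices is a core, i.e. every endomorphism of $L(K_{2m+1})$ is an automorphism.
   Context: An endomorphism of a graph $X$ is a map $f:V(X)\to V(X)$ such that adjacent vertices are mapped to adjacent vertices; $X$ is a core if all its endomorphisms are automorphisms. *)

theory Defs
  imports Main
begin

definition is_endomorphism :: "'a set \<Rightarrow> ('a \<Rightarrow> 'a \<Rightarrow> bool) \<Rightarrow> ('a \<Rightarrow> 'a) \<Rightarrow> bool" where
  "is_endomorphism V E f \<longleftrightarrow>
     (\<forall>x\<in>V. f x \<in> V) \<and> (\<forall>x\<in>V. \<forall>y\<in>V. E x y \<longrightarrow> E (f x) (f y))"

definition is_automorphism :: "'a set \<Rightarrow> ('a \<Rightarrow> 'a \<Rightarrow> bool) \<Rightarrow> ('a \<Rightarrow> 'a) \<Rightarrow> bool" where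
  "is_automorphism V E f \<longleftrightarrow>
     bij_betw f V V \<and> (\<forall>x\<in>V. \<forall>y\<in>V. E x y \<longleftrightarrow> E (f x) (f y))"

definition is_core :: "'a set \<Rightarrow> ('a \<Rightarrow> 'a \<Rightarrow> bool) \<Rightarrow> bool" where
  "is_core V E \<longleftrightarrow> (\<forall>f. is_endomorphism V E f \<longrightarrow> is_automorphism V E f)"

definition lineK_vertices :: "nat \<Rightarrow> nat set set" where
  "lineK_vertices n = {e. e \<subseteq> {0..<n} \<and> card e = 2}"

definition lineK_adj :: "nat set \<Rightarrow> nat set \<Rightarrow> bool" where
  "lineK_adj e e' \<longleftrightarrow> e \<noteq> e' \<and> e \<inter> e' \<noteq> {}"

end

theory Submission
  imports Defs
begin

(* The edges of K_n through a vertex i form a clique of size n - 1 in L(K_n), and a family of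
   pairwise intersecting 2-sets either has a common point or is a triangle. So for n \<noteq> 4 an
   endomorphism f maps every star into a star, giving a vertex map \<sigma> with \<sigma> i \<in> f e whenever
   i \<in> e. If \<sigma> i = \<sigma> j for i \<noteq> j, comparing the adjacent vertices {i, l} and {j, l} shows
   that \<sigma> is constant, so f maps all of L(K_n) into a single star, i.e. properly colours the
   edges of K_n with n - 1 colours. For odd n this is impossible, because every colour class is a
   matching of at most (n - 1)/2 edges. Hence \<sigma> is injective, f e = \<sigma> ` e, and f is an
   automorphism. *)

lemma doubleton_eq_if_card_2:
  assumes "card s = 2" "a \<in> s" "b \<in> s" "a \<noteq> b"
  shows "s = {a, b}"
  using assms by (auto simp: card_2_iff)

lemma card_2_obtain_other:
  assumes "card s = 2" "a \<in> s"
  obtains b where "s = {a, b}" "b \<noteq> a"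
  using assms by (auto simp: card_2_iff)

lemma doubleton_meeting_triangle:
  assumes "distinct [a, b, c]" "u \<noteq> v"
    and "{u, v} \<inter> {a, b} \<noteq> {}" "{u, v} \<inter> {b, c} \<noteq> {}" "{u, v} \<inter> {a, c} \<noteq> {}"
  shows "{u, v} \<in> {{a, b}, {b, c}, {a, c}}"
  using assms by (auto simp: doubleton_eq_iff)

lemma intersecting_doubletons_eq_triangle:
  assumes two: "\<forall>e\<in>C. card e = 2"
    and meet: "pairwise (\<lambda>e e'. e \<inter> e' \<noteq> {}) C"
    and abc: "distinct [a, b, c]" and triangle: "{{a, b}, {b, c}, {a, c}} \<subseteq> C"
  shows "C = {{a, b}, {b, c}, {a, c}}"
proof
  show "C \<subseteq> {{a, b}, {b, c}, {a, c}}"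
  proof
    fix z assume "z \<in> C"
    then obtain u v where uv: "z = {u, v}" "u \<noteq> v"
      using two card_2_iff by metis
    show "z \<in> {{a, b}, {b, c}, {a, c}}"
    proof (rule ccontr)
      assume "z \<notin> {{a, b}, {b, c}, {a, c}}"
      then have "z \<inter> {a, b} \<noteq> {}" "z \<inter> {b, c} \<noteq> {}" "z \<inter> {a, c} \<noteq> {}"
        using pairwiseD[OF meet] \<open>z \<in> C\<close> triangle by auto
      then have "z \<in> {{a, b}, {b, c}, {a, c}}"
        unfolding uv(1) by (rule doubleton_meeting_triangle[OF abc uv(2)])
      with \<open>z \<notin> {{a, b}, {b, c}, {a, c}}\<close> show False ..
    qed
  qed
qed (rule triangle)

lemma intersecting_doubletons_triangle:
  assumes two: "\<forall>e\<in>C. card e = 2"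
    and meet: "pairwise (\<lambda>e e'. e \<inter> e' \<noteq> {}) C"
    and no_common: "\<nexists>a. \<forall>e\<in>C. a \<in> e"
  obtains a b c where "distinct [a, b, c]" "C = {{a, b}, {b, c}, {a, c}}"
proof -
  have meetD: "z \<inter> z' \<noteq> {}" if "z \<in> C" "z' \<in> C" "z \<noteq> z'" for z z'
    using pairwiseD[OF meet that] .
  obtain e where e: "e \<in> C"
    using no_common by blast
  then obtain a b where ab: "e = {a, b}" "a \<noteq> b"
    using two card_2_iff by metis
  obtain x where x: "x \<in> C" "a \<notin> x"
    using no_common by blast
  have "b \<in> x"
    using meetD[OF e x(1)] ab x(2) by blast
  then obtain c where xc: "x = {b, c}" "c \<noteq> b"
    using two x(1) card_2_obtain_other by metis
  obtain y where y: "y \<in> C" "b \<notin> y"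
    using no_common by blast
  have "a \<in> y"
    using meetD[OF e y(1)] ab y(2) by blast
  then obtain d where yd: "y = {a, d}" "d \<noteq> a"
    using two y(1) card_2_obtain_other by metis
  have "d = c"
    using meetD[OF x(1) y(1)] xc yd x(2) y(2) by blast
  have abc: "distinct [a, b, c]"
    using ab xc x(2) by auto
  moreover have "{{a, b}, {b, c}, {a, c}} \<subseteq> C"
    using e x(1) y(1) unfolding ab(1) xc(1) yd(1) \<open>d = c\<close> by (simp add: insert_commute)
  ultimately show thesis
    by (intro that[OF abc] intersecting_doubletons_eq_triangle[OF two meet])
qed

lemma card_triangle:
  assumes "distinct [a, b, c]"
  shows "card {{a, b}, {b, c}, {a, c}} = 3"
  using assms by (auto simp: card_insert_if doubleton_eq_iff)

lemma intersecting_doubletons_common_point: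
  assumes "\<forall>e\<in>C. card e = 2" "pairwise (\<lambda>e e'. e \<inter> e' \<noteq> {}) C" "card C \<noteq> 3"
  shows "\<exists>a. \<forall>e\<in>C. a \<in> e"
  using intersecting_doubletons_triangle[OF assms(1,2)] card_triangle assms(3) by metis

lemma finite_lineK_vertices: "finite (lineK_vertices n)"
  unfolding lineK_vertices_def by (rule finite_subset[of _ "Pow {0..<n}"]) auto

lemma card_lineK_vertices: "card (lineK_vertices n) = n choose 2"
  using n_subsets[of "{0..<n}" 2] by (simp add: lineK_vertices_def)

lemma doubleton_in_lineK_vertices [simp]:
  "{i, j} \<in> lineK_vertices n \<longleftrightarrow> i < n \<and> j < n \<and> i \<noteq> j"
  by (auto simp: lineK_vertices_def)

lemma lineK_verticesE:
  assumes "e \<in> lineK_vertices n"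
  obtains i j where "e = {i, j}" "i \<noteq> j" "i < n" "j < n"
  using assms unfolding lineK_vertices_def by (auto simp: card_2_iff)

lemma lineK_vertices_subset: "e \<in> lineK_vertices n \<Longrightarrow> e \<subseteq> {0..<n}"
  by (simp add: lineK_vertices_def)

lemma card_lineK_vertex: "e \<in> lineK_vertices n \<Longrightarrow> card e = 2"
  by (simp add: lineK_vertices_def)

definition lineK_star :: "nat \<Rightarrow> nat \<Rightarrow> nat set set" where
  "lineK_star n i = {e \<in> lineK_vertices n. i \<in> e}"

lemma card_lineK_star:
  assumes "i < n"
  shows "card (lineK_star n i) = n - 1"
proof -
  have "lineK_star n i = (\<lambda>j. {i, j}) ` ({0..<n} - {i})"
    using assms by (auto simp: lineK_star_def elim!: lineK_verticesE)
  moreover have "inj_on (\<lambda>j. {i, j}) ({0..<n} - {i})"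
    by (auto simp: inj_on_def doubleton_eq_iff)
  ultimately show ?thesis
    using assms by (simp add: card_image)
qed

lemma card_lineK_star_le: "card (lineK_star n i) \<le> n - 1"
proof (cases "i < n")
  case False
  then have "lineK_star n i = {}"
    by (auto simp: lineK_star_def lineK_vertices_def)
  then show ?thesis
    by simp
qed (simp add: card_lineK_star)

lemma card_lineK_matching:
  assumes "M \<subseteq> lineK_vertices n" "pairwise disjnt M"
  shows "2 * card M \<le> n"
proof -
  have "2 * card M = (\<Sum>e\<in>M. 2)"
    by simp
  also have "\<dots> = sum card M"
    using assms(1) card_lineK_vertex by (intro sum.cong) auto
  also have "\<dots> = card (\<Union>M)"
    using assms by (intro card_Union_disjoint[symmetric])
      (auto intro: finite_subset[OF lineK_vertices_subset])
  also have "\<dots> \<le> card {0..<n}"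
    using assms(1) lineK_vertices_subset by (intro card_mono) auto
  finally show ?thesis by simp
qed

lemma odd_lineK_colouring_card_ge:
  assumes "odd n" "1 < n"
    and proper: "\<forall>x\<in>lineK_vertices n. \<forall>y\<in>lineK_vertices n. lineK_adj x y \<longrightarrow> c x \<noteq> c y"
  shows "n \<le> card (c ` lineK_vertices n)"
proof -
  let ?V = "lineK_vertices n"
  obtain h where n: "n = 2 * h + 1" and "0 < h"
    using assms(1,2) by (auto elim!: oddE)
  have class_bound: "card {e \<in> ?V. c e = k} \<le> h" for k
  proof -
    have "pairwise disjnt {e \<in> ?V. c e = k}"
      using proper by (auto simp: pairwise_def disjnt_def lineK_adj_def)
    then have "2 * card {e \<in> ?V. c e = k} \<le> n"
      by (intro card_lineK_matching) auto
    then show ?thesis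
      using n by simp
  qed
  have "n * h = card ?V"
    by (simp add: card_lineK_vertices choose_two n)
  also have "\<dots> \<le> (\<Sum>k\<in>c ` ?V. card {e \<in> ?V. c e = k})"
    by (rule order_trans[OF card_mono card_UN_le])
      (auto simp: finite_lineK_vertices)
  also have "\<dots> \<le> card (c ` ?V) * h"
    using sum_bounded_above[OF class_bound] by simp
  finally show ?thesis
    using \<open>0 < h\<close> by simp
qed

lemma lineK_endomorphism_mem:
  "is_endomorphism (lineK_vertices n) lineK_adj f \<Longrightarrow> e \<in> lineK_vertices n \<Longrightarrow> f e \<in> lineK_vertices n"
  by (simp add: is_endomorphism_def)

lemma lineK_endomorphism_adj:
  assumes "is_endomorphism (lineK_vertices n) lineK_adj f"
    and "x \<in> lineK_vertices n" "y \<in> lineK_vertices n" "x \<noteq> y" "x \<inter> y \<noteq> {}"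
  shows "f x \<noteq> f y" "f x \<inter> f y \<noteq> {}"
  using assms by (auto simp: is_endomorphism_def lineK_adj_def)

lemma lineK_endomorphism_star_common_point:
  assumes endo: "is_endomorphism (lineK_vertices n) lineK_adj f"
    and "n \<noteq> 4" "i < n"
  shows "\<exists>a. \<forall>e\<in>lineK_star n i. a \<in> f e"
proof -
  let ?S = "lineK_star n i"
  have star_adj: "x \<in> lineK_vertices n" "y \<in> lineK_vertices n" "x \<inter> y \<noteq> {}"
    if "x \<in> ?S" "y \<in> ?S" for x y
    using that by (auto simp: lineK_star_def)
  have "inj_on f ?S"
  proof (rule inj_onI, rule ccontr)
    fix x y assume "x \<in> ?S" "y \<in> ?S" "f x = f y" "x \<noteq> y"
    then show False
      using lineK_endomorphism_adj(1)[OF endo, of x y] star_adj[of x y] by simp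
  qed
  have "\<forall>e\<in>f ` ?S. card e = 2"
    using endo card_lineK_vertex by (auto simp: is_endomorphism_def lineK_star_def)
  moreover have "pairwise (\<lambda>e e'. e \<inter> e' \<noteq> {}) (f ` ?S)"
  proof (rule pairwise_imageI)
    fix x y assume "x \<in> ?S" "y \<in> ?S" "x \<noteq> y"
    then show "f x \<inter> f y \<noteq> {}"
      using lineK_endomorphism_adj(2)[OF endo, of x y] star_adj[of x y] by simp
  qed
  moreover have "card (f ` ?S) \<noteq> 3"
    using \<open>inj_on f ?S\<close> assms(2,3) by (simp add: card_image card_lineK_star)
  ultimately have "\<exists>a. \<forall>e\<in>f ` ?S. a \<in> e"
    by (rule intersecting_doubletons_common_point)
  then show ?thesis
    by auto
qed

lemma lineK_endomorphism_vertex_map: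
  assumes "is_endomorphism (lineK_vertices n) lineK_adj f" "n \<noteq> 4"
  obtains \<sigma> where "\<forall>i<n. \<forall>e\<in>lineK_star n i. \<sigma> i \<in> f e"
proof -
  have "\<exists>a. i < n \<longrightarrow> (\<forall>e\<in>lineK_star n i. a \<in> f e)" for i
    using lineK_endomorphism_star_common_point[OF assms, of i] by simp
  then obtain \<sigma> where "\<forall>i. i < n \<longrightarrow> (\<forall>e\<in>lineK_star n i. \<sigma> i \<in> f e)"
    by (metis choice)
  then show thesis
    using that by simp
qed

lemma odd_lineK_endomorphism_image_not_in_star:
  assumes endo: "is_endomorphism (lineK_vertices n) lineK_adj f" and "odd n" "1 < n"
  shows "\<not> f ` lineK_vertices n \<subseteq> lineK_star n k"
proof
  let ?V = "lineK_vertices n"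
  assume "f ` ?V \<subseteq> lineK_star n k"
  then have "card (f ` ?V) \<le> card (lineK_star n k)"
    by (rule card_mono[rotated])
      (rule finite_subset[OF _ finite_lineK_vertices[of n]], simp add: lineK_star_def)
  also have "\<dots> < n"
    using card_lineK_star_le[of n k] \<open>1 < n\<close> by simp
  finally have "card (f ` ?V) < n" .
  moreover have "\<forall>x\<in>?V. \<forall>y\<in>?V. lineK_adj x y \<longrightarrow> f x \<noteq> f y"
    using endo by (auto simp: is_endomorphism_def lineK_adj_def)
  then have "n \<le> card (f ` ?V)"
    using \<open>odd n\<close> \<open>1 < n\<close> by (intro odd_lineK_colouring_card_ge)
  ultimately show False
    by simp
qed

lemma lineK_endomorphism_vertex_map_const:
  assumes endo: "is_endomorphism (lineK_vertices n) lineK_adj f"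
    and \<sigma>: "\<forall>i<n. \<forall>e\<in>lineK_star n i. \<sigma> i \<in> f e"
    and ij: "i < n" "j < n" "i \<noteq> j" "\<sigma> i = \<sigma> j" and "l < n"
  shows "\<sigma> l = \<sigma> i"
proof (rule ccontr)
  assume ne: "\<sigma> l \<noteq> \<sigma> i"
  then have "l \<noteq> i" "l \<noteq> j"
    using ij by auto
  have "f {k, l} = {\<sigma> i, \<sigma> l}" if "k \<in> {i, j}" for k
  proof -
    have k: "k < n" "k \<noteq> l" "\<sigma> k = \<sigma> i"
      using that ij \<open>l \<noteq> i\<close> \<open>l \<noteq> j\<close> by auto
    then have "{k, l} \<in> lineK_vertices n"
      using \<open>l < n\<close> by simp
    then have "card (f {k, l}) = 2"
      by (rule card_lineK_vertex[OF lineK_endomorphism_mem[OF endo]])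
    moreover have "\<sigma> k \<in> f {k, l}" "\<sigma> l \<in> f {k, l}"
      using \<sigma> \<open>{k, l} \<in> lineK_vertices n\<close> k(1) \<open>l < n\<close> by (simp_all add: lineK_star_def)
    ultimately show ?thesis
      using ne k(3) by (intro doubleton_eq_if_card_2) auto
  qed
  then have "f {i, l} = f {j, l}"
    by simp
  moreover have "f {i, l} \<noteq> f {j, l}"
    using ij \<open>l < n\<close> \<open>l \<noteq> i\<close> \<open>l \<noteq> j\<close>
    by (intro lineK_endomorphism_adj(1)[OF endo]) (auto simp: doubleton_eq_iff)
  ultimately show False
    by simp
qed

lemma lineK_endomorphism_vertex_map_inj:
  assumes endo: "is_endomorphism (lineK_vertices n) lineK_adj f" and "odd n"
    and \<sigma>: "\<forall>i<n. \<forall>e\<in>lineK_star n i. \<sigma> i \<in> f e"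
  shows "inj_on \<sigma> {0..<n}"
proof (rule inj_onI, rule ccontr)
  fix i j assume "i \<in> {0..<n}" "j \<in> {0..<n}" and ij: "\<sigma> i = \<sigma> j" "i \<noteq> j"
  then have "i < n" "j < n"
    by simp_all
  have \<sigma>_const: "\<sigma> l = \<sigma> i" if "l < n" for l
    using endo \<sigma> \<open>i < n\<close> \<open>j < n\<close> ij(2,1) that by (rule lineK_endomorphism_vertex_map_const)
  have image_in_star: "f ` lineK_vertices n \<subseteq> lineK_star n (\<sigma> i)"
  proof
    fix e' assume "e' \<in> f ` lineK_vertices n"
    then obtain e where e: "e \<in> lineK_vertices n" "e' = f e"
      by blast
    obtain a where "a \<in> e" "a < n"
      using e(1) by (rule lineK_verticesE) auto
    then have "\<sigma> a \<in> f e"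
      using \<sigma> e(1) by (simp add: lineK_star_def)
    then have "\<sigma> i \<in> f e"
      using \<sigma>_const[OF \<open>a < n\<close>] by simp
    then show "e' \<in> lineK_star n (\<sigma> i)"
      using lineK_endomorphism_mem[OF endo e(1)] e(2) by (simp add: lineK_star_def)
  qed
  have "1 < n"
    using \<open>i < n\<close> \<open>j < n\<close> \<open>i \<noteq> j\<close> by linarith
  with endo \<open>odd n\<close> have "\<not> f ` lineK_vertices n \<subseteq> lineK_star n (\<sigma> i)"
    by (rule odd_lineK_endomorphism_image_not_in_star)
  then show False
    using image_in_star by contradiction
qed

lemma lineK_endomorphism_eq_image:
  assumes endo: "is_endomorphism (lineK_vertices n) lineK_adj f"
    and \<sigma>: "\<forall>i<n. \<forall>e\<in>lineK_star n i. \<sigma> i \<in> f e" "inj_on \<sigma> {0..<n}"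
    and e: "e \<in> lineK_vertices n"
  shows "f e = \<sigma> ` e"
proof -
  obtain i j where ij: "e = {i, j}" "i \<noteq> j" "i < n" "j < n"
    using e by (rule lineK_verticesE)
  have "card (f e) = 2"
    using lineK_endomorphism_mem[OF endo e] by (rule card_lineK_vertex)
  moreover have "\<sigma> i \<in> f e" "\<sigma> j \<in> f e"
    using \<sigma>(1) e ij by (simp_all add: lineK_star_def)
  moreover have "\<sigma> i \<noteq> \<sigma> j"
    using inj_onD[OF \<sigma>(2), of i j] ij by auto
  ultimately show ?thesis
    using ij(1) by (simp add: doubleton_eq_if_card_2)
qed

lemma lineK_automorphismI:
  assumes endo: "is_endomorphism (lineK_vertices n) lineK_adj f"
    and \<sigma>: "inj_on \<sigma> {0..<n}" "\<forall>e\<in>lineK_vertices n. f e = \<sigma> ` e"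
  shows "is_automorphism (lineK_vertices n) lineK_adj f"
proof -
  let ?V = "lineK_vertices n"
  have f_eq_iff: "f x = f y \<longleftrightarrow> x = y" and f_Int: "f x \<inter> f y = \<sigma> ` (x \<inter> y)"
    if "x \<in> ?V" "y \<in> ?V" for x y
    using that \<sigma>(2) inj_on_image_eq_iff[OF \<sigma>(1)] inj_on_image_Int[OF \<sigma>(1)] lineK_vertices_subset
    by simp_all
  have "inj_on f ?V"
    using f_eq_iff by (auto intro: inj_onI)
  moreover have "f ` ?V \<subseteq> ?V"
    using endo by (auto simp: is_endomorphism_def)
  ultimately have "bij_betw f ?V ?V"
    using endo_inj_surj[OF finite_lineK_vertices] by (simp add: bij_betw_def)
  moreover have "lineK_adj x y \<longleftrightarrow> lineK_adj (f x) (f y)" if "x \<in> ?V" "y \<in> ?V" for x y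
    using f_eq_iff[OF that] f_Int[OF that] by (simp add: lineK_adj_def)
  ultimately show ?thesis
    by (simp add: is_automorphism_def)
qed

theorem is_core_lineK_odd:
  assumes "odd n"
  shows "is_core (lineK_vertices n) lineK_adj"
  unfolding is_core_def
proof (intro allI impI)
  fix f assume endo: "is_endomorphism (lineK_vertices n) lineK_adj f"
  have "n \<noteq> 4"
    using \<open>odd n\<close> by presburger
  then obtain \<sigma> where \<sigma>: "\<forall>i<n. \<forall>e\<in>lineK_star n i. \<sigma> i \<in> f e"
    by (rule lineK_endomorphism_vertex_map[OF endo])
  have inj: "inj_on \<sigma> {0..<n}"
    using endo \<open>odd n\<close> \<sigma> by (rule lineK_endomorphism_vertex_map_inj)
  have "\<forall>e\<in>lineK_vertices n. f e = \<sigma> ` e"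
    using lineK_endomorphism_eq_image[OF endo \<sigma> inj] by blast
  with endo inj show "is_automorphism (lineK_vertices n) lineK_adj f"
    by (rule lineK_automorphismI)
qed

theorem mainTheorem7:
  fixes m :: nat
  assumes "m \<ge> 1"
  shows "is_core (lineK_vertices (2 * m + 1)) lineK_adj"
  by (rule is_core_lineK_odd) simp

end
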